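(* Let $X$ be a topological space, $Y$ a completely regular space, $G$ an infinite open subset of $Y$, $g,h:X\to\mathbb R$ continuous functions with $g\le0\le h$, and $A$ a functionally closed subset of $X$. Then there exists a separately continuous function $f:X\times Y\to\mathbb R$ such that $\operatorname{supp}f\subseteq(X\setminus A)\times G$ and, for every $x\in X\setminus A$, $\min_{y\in G}f(x,y)=g(x)$ and $\max_{y\in G}f(x,y)=h(x)$ (the minimum and maximum being attained).
   Context: Completely regular spaces are assumed $T_1$. $A\subseteq X$ is functionally closed if $A=\alpha^{-1}(0)$ for some continuous $\alpha:X\to[0,1]$. $\operatorname{supp}f=\{(x,y):f(x,y)\ne0\}$. $f$ is separately continuous if it is continuous in each variable when the other is fixed. *)

theory Defs
  imports "HOL-Analysis.Analysis"
begin

definition functionally_closed :: "'a topology \<Rightarrow> 'a set \<Rightarrow> bool" where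
  "functionally_closed X A \<longleftrightarrow>
     (\<exists>\<alpha>::'a \<Rightarrow> real. continuous_map X (top_of_set {0..1}) \<alpha> \<and>
        A = {x \<in> topspace X. \<alpha> x = 0})"

definition separately_continuous ::
  "'a topology \<Rightarrow> 'b topology \<Rightarrow> ('a \<Rightarrow> 'b \<Rightarrow> real) \<Rightarrow> bool" where
  "separately_continuous X Y f \<longleftrightarrow>
     (\<forall>x \<in> topspace X. continuous_map Y euclideanreal (\<lambda>y. f x y)) \<and>
     (\<forall>y \<in> topspace Y. continuous_map X euclideanreal (\<lambda>x. f x y))"

definition supp2 :: "'a topology \<Rightarrow> 'b topology \<Rightarrow> ('a \<Rightarrow> 'b \<Rightarrow> real) \<Rightarrow> ('a \<times> 'b) set" where
  "supp2 X Y f = {(x, y). x \<in> topspace X \<and> y \<in> topspace Y \<and> f x y \<noteq> 0}"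

end

theory Submission
  imports Defs
begin

text \<open>Write A as the zero set of alpha : X -> [0,1]. An infinite open subset of a Hausdorff
  space contains infinitely many pairwise disjoint nonempty open sets; complete regularity puts
  into each of them a bump of height 1 peaking at some point, so at every point of Y at most one
  bump is nonzero. The dyadic trapezoids tau n (equal to 1 on [2^-(n+1), 2^-n], each t > 0
  lying in the support of only finitely many of them) cover (0,1], and
    f x y = sum over n of tau n (alpha x) * (g x * bump (n,False) y + h x * bump (n,True) y).
  For fixed x the sum is finite, so f x is continuous; for fixed y it has at most one nonzero
  term, so f (-) y is continuous. Every value f x y is g x or h x scaled by a factor in [0,1],
  and for n with tau n (alpha x) = 1 the values g x and h x are taken at the two peaks.\<close>

lemma Hausdorff_infinite_openin_split:
  assumes Y: "Hausdorff_space Y" and Z: "openin Y Z" "infinite Z"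
  obtains W Z' where "openin Y W" "W \<noteq> {}" "openin Y Z'" "infinite Z'"
    "W \<union> Z' \<subseteq> Z" "W \<inter> Z' = {}"
proof -
  \<comment> \<open>Separate two points of Z by U and V. Either Z minus the closure of U \<inter> Z is still
    infinite, or V \<inter> Z is finite, hence closed, and Z minus it is open and infinite.\<close>
  have ZY: "Z \<subseteq> topspace Y"
    using Z(1) by (rule openin_subset)
  obtain a where a: "a \<in> Z"
    using Z(2) infinite_imp_nonempty by blast
  have "infinite (Z - {a})"
    using Z(2) by simp
  then obtain b where b: "b \<in> Z" "b \<noteq> a"
    by (metis Diff_iff ex_in_conv finite.emptyI singletonI)
  obtain U V where UV: "openin Y U" "openin Y V" "a \<in> U" "b \<in> V" "disjnt U V"
    using Y a b ZY unfolding Hausdorff_space_def by (metis subsetD)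
  show thesis
  proof (cases "finite (Z - Y closure_of (U \<inter> Z))")
    case False
    have "U \<inter> Z \<subseteq> Y closure_of (U \<inter> Z)"
      using ZY by (intro closure_of_subset) auto
    then show thesis
      using False UV(1,3) Z(1) a
      by (intro that[of "U \<inter> Z" "Z - Y closure_of (U \<inter> Z)"]) auto
  next
    case True
    have "V \<inter> Y closure_of (U \<inter> Z) = {}"
      using UV(5) openin_Int_closure_of_eq_empty[OF UV(2)] by (auto simp: disjnt_def)
    then have "V \<inter> Z \<subseteq> Z - Y closure_of (U \<inter> Z)"
      by auto
    then have "finite (V \<inter> Z)"
      using True by (rule finite_subset)
    then have "closedin Y (V \<inter> Z)"
      using Hausdorff_imp_t1_space[OF Y] ZY unfolding t1_space_closedin_finite by blast
    then show thesis
      using that[of "V \<inter> Z" "Z - V \<inter> Z"] \<open>finite (V \<inter> Z)\<close> UV(2,4) Z b by auto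
  qed
qed

lemma Hausdorff_infinite_openin_disjoint_family:
  assumes Y: "Hausdorff_space Y" and G: "openin Y G" "infinite G"
  obtains W :: "nat \<Rightarrow> 'a set"
  where "\<And>n. openin Y (W n)" "\<And>n. W n \<noteq> {}" "\<And>n. W n \<subseteq> G" "disjoint_family W"
proof -
  define good where "good Z \<longleftrightarrow> openin Y Z \<and> infinite Z" for Z
  have "\<exists>W Z'. good Z \<longrightarrow>
          openin Y W \<and> W \<noteq> {} \<and> good Z' \<and> W \<union> Z' \<subseteq> Z \<and> W \<inter> Z' = {}" for Z
  proof (cases "good Z")
    case True
    then obtain W Z' where "openin Y W" "W \<noteq> {}" "openin Y Z'" "infinite Z'"
        "W \<union> Z' \<subseteq> Z" "W \<inter> Z' = {}"
      unfolding good_def by (metis Hausdorff_infinite_openin_split[OF Y])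
    then show ?thesis
      unfolding good_def by blast
  qed simp
  then obtain piece rest where split: "\<And>Z. good Z \<Longrightarrow>
      openin Y (piece Z) \<and> piece Z \<noteq> {} \<and> good (rest Z) \<and>
      piece Z \<union> rest Z \<subseteq> Z \<and> piece Z \<inter> rest Z = {}"
    by metis
  define Z where "Z n = (rest ^^ n) G" for n
  have Z_Suc: "Z (Suc n) = rest (Z n)" and Z_0: "Z 0 = G" for n
    by (simp_all add: Z_def)
  have good_Z: "good (Z n)" for n
    by (induction n) (use G split in \<open>simp_all add: good_def Z_0 Z_Suc\<close>)
  note split_Z = split[OF good_Z]
  have "decseq Z"
    using split_Z by (intro decseq_SucI) (simp add: Z_Suc)
  have piece_sub: "piece (Z n) \<subseteq> Z n" for n
    using split_Z by blast
  have "piece (Z m) \<inter> piece (Z n) = {}" if "m < n" for m n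
  proof -
    have "piece (Z n) \<subseteq> Z (Suc m)"
      using piece_sub decseqD[OF \<open>decseq Z\<close>] that by (meson Suc_leI order_trans)
    moreover have "piece (Z m) \<inter> Z (Suc m) = {}"
      using split_Z[of m] by (simp add: Z_Suc)
    ultimately show ?thesis
      by blast
  qed
  then have "disjoint_family (\<lambda>n. piece (Z n))"
    unfolding disjoint_family_on_def by (metis Int_commute linorder_neq_iff)
  moreover have "piece (Z n) \<subseteq> G" for n
    using piece_sub[of n] decseqD[OF \<open>decseq Z\<close>, of 0 n] by (simp add: Z_0)
  ultimately show thesis
    using split_Z by (intro that[of "\<lambda>n. piece (Z n)"]) auto
qed

lemma completely_regular_space_bump:
  assumes Y: "completely_regular_space Y" and W: "openin Y W" "y \<in> W"
  obtains \<phi> where "continuous_map Y euclideanreal \<phi>" "\<phi> y = 1"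
    "\<And>z. z \<in> topspace Y \<Longrightarrow> \<phi> z \<in> {0..1}" "\<And>z. z \<in> topspace Y - W \<Longrightarrow> \<phi> z = 0"
proof -
  have "y \<in> topspace Y - (topspace Y - W)"
    using W openin_subset by auto
  then obtain f :: "'a \<Rightarrow> real" where f: "continuous_map Y (top_of_set {0..1}) f"
    "f y = 0" "f ` (topspace Y - W) \<subseteq> {1}"
    using Y W(1) unfolding completely_regular_space_def by (meson closedin_diff closedin_topspace)
  have "continuous_map Y euclideanreal f"
    using f(1) by (rule continuous_map_into_fulltopology)
  then have "continuous_map Y euclideanreal (\<lambda>z. 1 - f z)"
    by (intro continuous_map_diff) auto
  moreover have "f z \<in> {0..1}" if "z \<in> topspace Y" for z
    using f(1) that by (auto simp: continuous_map_def)
  ultimately show thesis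
    using f(2,3) by (intro that[of "\<lambda>z. 1 - f z"]) auto
qed

definition peaked_bumps :: "'a topology \<Rightarrow> 'a set \<Rightarrow> ('i \<Rightarrow> 'a \<Rightarrow> real) \<Rightarrow> ('i \<Rightarrow> 'a) \<Rightarrow> bool"
  where "peaked_bumps Y G \<phi> p \<longleftrightarrow> G \<subseteq> topspace Y \<and>
    (\<forall>i. continuous_map Y euclideanreal (\<phi> i) \<and> p i \<in> G \<and> \<phi> i (p i) = 1) \<and>
    (\<forall>i. \<forall>z \<in> topspace Y. \<phi> i z \<in> {0..1} \<and> (\<phi> i z \<noteq> 0 \<longrightarrow> z \<in> G)) \<and>
    (\<forall>i j. \<forall>z \<in> topspace Y. \<phi> i z \<noteq> 0 \<longrightarrow> \<phi> j z \<noteq> 0 \<longrightarrow> i = j)"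

lemma peaked_bumpsD:
  assumes "peaked_bumps Y G \<phi> p"
  shows "G \<subseteq> topspace Y" "continuous_map Y euclideanreal (\<phi> i)" "p i \<in> G" "\<phi> i (p i) = 1"
    and "z \<in> topspace Y \<Longrightarrow> \<phi> i z \<in> {0..1}"
    and "z \<in> topspace Y \<Longrightarrow> \<phi> i z \<noteq> 0 \<Longrightarrow> z \<in> G"
    and "z \<in> topspace Y \<Longrightarrow> \<phi> i z \<noteq> 0 \<Longrightarrow> \<phi> j z \<noteq> 0 \<Longrightarrow> i = j"
  using assms unfolding peaked_bumps_def by auto

lemma peaked_bumps_vanish_at_peak:
  assumes "peaked_bumps Y G \<phi> p" "j \<noteq> i"
  shows "\<phi> j (p i) = 0"
proof (rule ccontr)
  assume "\<phi> j (p i) \<noteq> 0"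
  moreover have "p i \<in> topspace Y"
    using peaked_bumpsD(1,3)[OF assms(1)] by auto
  ultimately show False
    using peaked_bumpsD(4,7)[OF assms(1)] assms(2) by fastforce
qed

lemma completely_regular_infinite_openin_peaked_bumps:
  fixes G :: "'a set"
  assumes Y: "completely_regular_space Y" "Hausdorff_space Y" and G: "openin Y G" "infinite G"
  obtains \<phi> :: "'i::countable \<Rightarrow> 'a \<Rightarrow> real" and p where "peaked_bumps Y G \<phi> p"
proof -
  obtain W :: "nat \<Rightarrow> 'a set" where W: "\<And>n. openin Y (W n)" "\<And>n. W n \<noteq> {}"
    "\<And>n. W n \<subseteq> G" "disjoint_family W"
    using Hausdorff_infinite_openin_disjoint_family[OF Y(2) G] by blast
  define p where "p i = (SOME y. y \<in> W (to_nat i))" for i :: 'i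
  have p: "p i \<in> W (to_nat i)" for i
    unfolding p_def using W(2) by (simp add: some_in_eq)
  have "\<exists>\<phi>. continuous_map Y euclideanreal \<phi> \<and> \<phi> (p i) = 1 \<and>
      (\<forall>z \<in> topspace Y. \<phi> z \<in> {0..1}) \<and> (\<forall>z \<in> topspace Y - W (to_nat i). \<phi> z = 0)" for i
  proof -
    obtain \<phi> where "continuous_map Y euclideanreal \<phi>" "\<phi> (p i) = 1"
      "\<And>z. z \<in> topspace Y \<Longrightarrow> \<phi> z \<in> {0..1}" "\<And>z. z \<in> topspace Y - W (to_nat i) \<Longrightarrow> \<phi> z = 0"
      using completely_regular_space_bump[OF Y(1) W(1) p] by blast
    then show ?thesis
      by blast
  qed
  then obtain \<phi> where \<phi>: "\<And>i. continuous_map Y euclideanreal (\<phi> i) \<and> \<phi> i (p i) = 1 \<and>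
      (\<forall>z \<in> topspace Y. \<phi> i z \<in> {0..1}) \<and> (\<forall>z \<in> topspace Y - W (to_nat i). \<phi> i z = 0)"
    by metis
  have supp: "z \<in> W (to_nat i)" if "z \<in> topspace Y" "\<phi> i z \<noteq> 0" for i z
    using \<phi>[of i] that by blast
  have "i = j" if "z \<in> topspace Y" "\<phi> i z \<noteq> 0" "\<phi> j z \<noteq> 0" for i j z
  proof -
    have "z \<in> W (to_nat i) \<inter> W (to_nat j)"
      using supp that by blast
    then have "to_nat i = to_nat j"
      using W(4) unfolding disjoint_family_on_def by blast
    then show ?thesis
      by simp
  qed
  moreover have "p i \<in> G" for i
    using p W(3) by blast
  moreover have "z \<in> G" if "z \<in> topspace Y" "\<phi> i z \<noteq> 0" for i z
    using supp[OF that] W(3) by blast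
  moreover have "G \<subseteq> topspace Y"
    using G(1) by (rule openin_subset)
  ultimately show thesis
    using \<phi> by (intro that[of \<phi> p]) (auto simp: peaked_bumps_def)
qed

definition trapezoid :: "real \<Rightarrow> real" where
  "trapezoid s = max 0 (min 1 (min (4 * s - 1) (2 - s)))"

definition dyadic_bump :: "nat \<Rightarrow> real \<Rightarrow> real" where
  "dyadic_bump n t = trapezoid (2 ^ n * t)"

lemma continuous_map_dyadic_bump:
  "continuous_map X euclideanreal a \<Longrightarrow> continuous_map X euclideanreal (\<lambda>x. dyadic_bump n (a x))"
  unfolding dyadic_bump_def trapezoid_def by (intro continuous_intros)

lemma dyadic_bump_range: "dyadic_bump n t \<in> {0..1}"
  by (simp add: dyadic_bump_def trapezoid_def)

lemma trapezoid_eq_0: "s \<le> 1 / 4 \<or> 2 \<le> s \<Longrightarrow> trapezoid s = 0"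
  by (auto simp: trapezoid_def)

lemma trapezoid_eq_1: "1 / 2 \<le> s \<Longrightarrow> s \<le> 1 \<Longrightarrow> trapezoid s = 1"
  by (simp add: trapezoid_def)

lemma dyadic_bump_nonpos: "t \<le> 0 \<Longrightarrow> dyadic_bump n t = 0"
  using mult_nonneg_nonpos[of "2 ^ n" t] by (simp add: dyadic_bump_def trapezoid_eq_0)

lemma finite_dyadic_bump_nonzero: "finite {n. dyadic_bump n t \<noteq> 0}"
proof (cases "t \<le> 0")
  case True
  then show ?thesis
    by (simp add: dyadic_bump_nonpos)
next
  case False
  obtain N where N: "2 / t < 2 ^ N"
    using real_arch_pow[of 2] by auto
  have "n < N" if "dyadic_bump n t \<noteq> 0" for n
  proof (rule ccontr)
    assume "\<not> n < N"
    then have "2 ^ N * t \<le> 2 ^ n * t"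
      using False by (intro mult_right_mono power_increasing) auto
    moreover have "2 < 2 ^ N * t"
      using N False by (simp add: field_simps)
    ultimately show False
      using that by (simp add: dyadic_bump_def trapezoid_eq_0)
  qed
  then have "{n. dyadic_bump n t \<noteq> 0} \<subseteq> {..<N}"
    by blast
  then show ?thesis
    by (rule finite_subset) simp
qed

lemma dyadic_bump_eq_1:
  assumes "0 < t" "t \<le> 1"
  obtains n where "dyadic_bump n t = 1"
proof -
  obtain N where "1 / t < 2 ^ N"
    using real_arch_pow[of 2] by auto
  then have "\<exists>N. 1 < 2 ^ N * t"
    using assms(1) by (auto simp: field_simps)
  then obtain n where "\<not> 1 < 2 ^ n * t" "1 < 2 ^ Suc n * t"
    using exists_least_lemma[of "\<lambda>n. 1 < 2 ^ n * t"] assms(2) by auto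
  then have "dyadic_bump n t = 1"
    by (simp add: dyadic_bump_def trapezoid_eq_1)
  then show thesis
    by (rule that)
qed

lemma mult_unit_interval_between:
  fixes c s lo hi :: real
  assumes "lo \<le> 0" "0 \<le> hi" "c \<in> {lo..hi}" "s \<in> {0..1}"
  shows "c * s \<in> {lo..hi}"
proof -
  have "min c 0 \<le> c * s" "c * s \<le> max c 0"
    using assms(4) by (cases "0 \<le> c"; simp add: mult_left_le mult_le_0_iff mult_left_le_one_le)+
  then show ?thesis
    using assms(1-3) by auto
qed

text \<open>Only the nonzero coefficients are summed; should infinitely many be nonzero, the sum
  is 0 by convention, which is why finiteness is assumed below.\<close>

definition bump_series :: "('i \<Rightarrow> 'a \<Rightarrow> real) \<Rightarrow> ('i \<Rightarrow> 'b \<Rightarrow> real) \<Rightarrow> 'a \<Rightarrow> 'b \<Rightarrow> real" where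
  "bump_series c \<phi> x y = (\<Sum>i | c i x \<noteq> 0. c i x * \<phi> i y)"

lemma bump_series_eq_single:
  assumes "finite {i. c i x \<noteq> 0}" "\<And>j. j \<noteq> i \<Longrightarrow> \<phi> j y = 0"
  shows "bump_series c \<phi> x y = c i x * \<phi> i y"
proof -
  have "bump_series c \<phi> x y = (\<Sum>j | c j x \<noteq> 0. if j = i then c i x * \<phi> i y else 0)"
    unfolding bump_series_def using assms(2) by (intro sum.cong) auto
  then show ?thesis
    using assms(1) by simp
qed

lemma bump_series_nonzero:
  assumes "bump_series c \<phi> x y \<noteq> 0"
  obtains i where "c i x \<noteq> 0" "\<phi> i y \<noteq> 0"
  using assms unfolding bump_series_def by (auto elim: sum.not_neutral_contains_not_neutral)

lemma separately_continuous_bump_series: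
  assumes c: "\<And>i. continuous_map X euclideanreal (c i)"
    and \<phi>: "\<And>i. continuous_map Y euclideanreal (\<phi> i)"
    and fin: "\<And>x. x \<in> topspace X \<Longrightarrow> finite {i. c i x \<noteq> 0}"
    and disj: "\<And>i j y. y \<in> topspace Y \<Longrightarrow> \<phi> i y \<noteq> 0 \<Longrightarrow> \<phi> j y \<noteq> 0 \<Longrightarrow> i = j"
  shows "separately_continuous X Y (bump_series c \<phi>)"
  unfolding separately_continuous_def
proof (intro conjI ballI)
  fix x
  assume "x \<in> topspace X"
  then show "continuous_map Y euclideanreal (bump_series c \<phi> x)"
    unfolding bump_series_def using fin \<phi> by (intro continuous_map_sum continuous_map_real_mult_left) auto
next
  fix y
  assume "y \<in> topspace Y"
  then obtain i where i: "\<And>j. j \<noteq> i \<Longrightarrow> \<phi> j y = 0"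
    using disj by metis
  have "bump_series c \<phi> x y = c i x * \<phi> i y" if "x \<in> topspace X" for x
    using fin[OF that] i by (rule bump_series_eq_single)
  moreover have "continuous_map X euclideanreal (\<lambda>x. c i x * \<phi> i y)"
    using c by (rule continuous_map_real_mult_right)
  ultimately show "continuous_map X euclideanreal (\<lambda>x. bump_series c \<phi> x y)"
    by (simp add: continuous_map_eq)
qed

lemma bump_series_between:
  assumes "finite {i. c i x \<noteq> 0}" "\<And>i j. \<phi> i y \<noteq> 0 \<Longrightarrow> \<phi> j y \<noteq> 0 \<Longrightarrow> i = j"
    and "\<And>i. \<phi> i y \<in> {0..1}" "\<And>i. c i x \<in> {lo..hi}" "lo \<le> 0" "0 \<le> hi"
  shows "bump_series c \<phi> x y \<in> {lo..hi}"
proof -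
  obtain i where "\<And>j. j \<noteq> i \<Longrightarrow> \<phi> j y = 0"
    using assms(2) by metis
  then have "bump_series c \<phi> x y = c i x * \<phi> i y"
    using assms(1) by (intro bump_series_eq_single)
  then show ?thesis
    using mult_unit_interval_between[OF assms(5,6) assms(4) assms(3)] by simp
qed

definition dyadic_coeff ::
    "('a \<Rightarrow> real) \<Rightarrow> ('a \<Rightarrow> real) \<Rightarrow> ('a \<Rightarrow> real) \<Rightarrow> nat \<times> bool \<Rightarrow> 'a \<Rightarrow> real" where
  "dyadic_coeff \<alpha> g h = (\<lambda>(n, upper) x. dyadic_bump n (\<alpha> x) * (if upper then h x else g x))"

lemma continuous_map_dyadic_coeff:
  assumes "continuous_map X euclideanreal \<alpha>" "continuous_map X euclideanreal g"
    "continuous_map X euclideanreal h"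
  shows "continuous_map X euclideanreal (dyadic_coeff \<alpha> g h i)"
proof (cases i)
  case (Pair n upper)
  have "continuous_map X euclideanreal (\<lambda>x. dyadic_bump n (\<alpha> x) * (if upper then h x else g x))"
    using assms by (cases upper) (simp_all add: continuous_map_real_mult continuous_map_dyadic_bump)
  then show ?thesis
    by (simp add: Pair dyadic_coeff_def)
qed

lemma finite_dyadic_coeff_nonzero: "finite {i. dyadic_coeff \<alpha> g h i x \<noteq> 0}"
proof (rule finite_subset)
  show "{i. dyadic_coeff \<alpha> g h i x \<noteq> 0} \<subseteq> {n. dyadic_bump n (\<alpha> x) \<noteq> 0} \<times> UNIV"
    by (auto simp: dyadic_coeff_def)
qed (simp add: finite_dyadic_bump_nonzero)

lemma dyadic_coeff_between:
  assumes "g x \<le> 0" "0 \<le> h x"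
  shows "dyadic_coeff \<alpha> g h i x \<in> {g x..h x}"
proof (cases i)
  case (Pair n upper)
  have "(if upper then h x else g x) * dyadic_bump n (\<alpha> x) \<in> {g x..h x}"
    using assms by (intro mult_unit_interval_between dyadic_bump_range) auto
  then show ?thesis
    by (simp add: Pair dyadic_coeff_def mult.commute)
qed

lemma dyadic_coeff_nonzero:
  assumes "dyadic_coeff \<alpha> g h i x \<noteq> 0"
  shows "0 < \<alpha> x"
proof (rule ccontr)
  assume "\<not> 0 < \<alpha> x"
  then have "dyadic_bump (fst i) (\<alpha> x) = 0"
    by (simp add: dyadic_bump_nonpos)
  then show False
    using assms by (cases i) (simp add: dyadic_coeff_def)
qed

lemma dyadic_coeff_attains:
  assumes "0 < \<alpha> x" "\<alpha> x \<le> 1"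
  obtains n where "dyadic_coeff \<alpha> g h (n, False) x = g x" "dyadic_coeff \<alpha> g h (n, True) x = h x"
proof -
  obtain n where "dyadic_bump n (\<alpha> x) = 1"
    using dyadic_bump_eq_1[OF assms] .
  then show thesis
    by (intro that[of n]) (simp_all add: dyadic_coeff_def)
qed

lemma separately_continuous_dyadic_bump_series:
  assumes "peaked_bumps Y G \<phi> p" and "continuous_map X euclideanreal \<alpha>"
    and "continuous_map X euclideanreal g" "continuous_map X euclideanreal h"
  shows "separately_continuous X Y (bump_series (dyadic_coeff \<alpha> g h) \<phi>)"
proof (rule separately_continuous_bump_series)
  show "continuous_map X euclideanreal (dyadic_coeff \<alpha> g h i)" for i
    using assms(2-4) by (rule continuous_map_dyadic_coeff)
qed (use peaked_bumpsD(2,7)[OF assms(1)] finite_dyadic_coeff_nonzero in auto)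

lemma supp2_dyadic_bump_series:
  assumes "peaked_bumps Y G \<phi> p"
  shows "supp2 X Y (bump_series (dyadic_coeff \<alpha> g h) \<phi>) \<subseteq> {x \<in> topspace X. 0 < \<alpha> x} \<times> G"
proof (clarsimp simp: supp2_def)
  fix x y
  assume y: "y \<in> topspace Y" and "bump_series (dyadic_coeff \<alpha> g h) \<phi> x y \<noteq> 0"
  then obtain i where "dyadic_coeff \<alpha> g h i x \<noteq> 0" "\<phi> i y \<noteq> 0"
    by (elim bump_series_nonzero)
  then show "0 < \<alpha> x \<and> y \<in> G"
    using dyadic_coeff_nonzero peaked_bumpsD(6)[OF assms y] by simp
qed

lemma dyadic_bump_series_extremes:
  assumes bumps: "peaked_bumps Y G \<phi> p"
    and "0 < \<alpha> x" "\<alpha> x \<le> 1" and gh: "g x \<le> 0" "0 \<le> h x"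
  defines "f \<equiv> bump_series (dyadic_coeff \<alpha> g h) \<phi>"
  shows "(\<exists>y \<in> G. f x y = g x) \<and> (\<forall>y \<in> G. g x \<le> f x y) \<and>
    (\<exists>y \<in> G. f x y = h x) \<and> (\<forall>y \<in> G. f x y \<le> h x)"
proof -
  have at_peak: "f x (p i) = dyadic_coeff \<alpha> g h i x" for i
  proof -
    have "f x (p i) = dyadic_coeff \<alpha> g h i x * \<phi> i (p i)"
      unfolding f_def using finite_dyadic_coeff_nonzero peaked_bumps_vanish_at_peak[OF bumps]
      by (rule bump_series_eq_single)
    then show ?thesis
      by (simp add: peaked_bumpsD(4)[OF bumps])
  qed
  obtain n where "dyadic_coeff \<alpha> g h (n, False) x = g x" "dyadic_coeff \<alpha> g h (n, True) x = h x"
    using assms(2,3) by (elim dyadic_coeff_attains)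
  then have "f x (p (n, False)) = g x" "f x (p (n, True)) = h x"
    by (simp_all add: at_peak)
  then have "\<exists>y \<in> G. f x y = g x" "\<exists>y \<in> G. f x y = h x"
    using peaked_bumpsD(3)[OF bumps] by metis+
  moreover have "f x y \<in> {g x..h x}" if "y \<in> G" for y
  proof -
    have y: "y \<in> topspace Y"
      using peaked_bumpsD(1)[OF bumps] that by auto
    show ?thesis
      unfolding f_def
    proof (rule bump_series_between)
      show "finite {i. dyadic_coeff \<alpha> g h i x \<noteq> 0}"
        by (rule finite_dyadic_coeff_nonzero)
      show "i = j" if "\<phi> i y \<noteq> 0" "\<phi> j y \<noteq> 0" for i j
        using bumps y that by (rule peaked_bumpsD(7))
      show "\<phi> i y \<in> {0..1}" for i
        using bumps y by (rule peaked_bumpsD(5))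
      show "dyadic_coeff \<alpha> g h i x \<in> {g x..h x}" for i
        using gh by (rule dyadic_coeff_between)
    qed (fact gh)+
  qed
  ultimately show ?thesis
    by simp
qed

theorem lemma7p1:
  fixes X :: "'a topology" and Y :: "'b topology"
    and G :: "'b set" and A :: "'a set" and g h :: "'a \<Rightarrow> real"
  assumes "completely_regular_space Y" and "t1_space Y"
    and "openin Y G" and "infinite G"
    and "continuous_map X euclideanreal g" and "continuous_map X euclideanreal h"
    and "\<forall>x \<in> topspace X. g x \<le> 0 \<and> 0 \<le> h x"
    and "functionally_closed X A"
  shows "\<exists>f :: 'a \<Rightarrow> 'b \<Rightarrow> real.
           separately_continuous X Y f \<and>
           supp2 X Y f \<subseteq> (topspace X - A) \<times> G \<and>
           (\<forall>x \<in> topspace X - A.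
              (\<exists>y \<in> G. f x y = g x) \<and> (\<forall>y \<in> G. g x \<le> f x y) \<and>
              (\<exists>y \<in> G. f x y = h x) \<and> (\<forall>y \<in> G. f x y \<le> h x))"
proof -
  obtain \<alpha> :: "'a \<Rightarrow> real" where \<alpha>: "continuous_map X (top_of_set {0..1}) \<alpha>"
    and A: "A = {x \<in> topspace X. \<alpha> x = 0}"
    using assms(8) unfolding functionally_closed_def by blast
  have \<alpha>_range: "\<alpha> x \<in> {0..1}" if "x \<in> topspace X" for x
    using \<alpha> that by (auto simp: continuous_map_def)
  have "Hausdorff_space Y"
    using assms(1,2) completely_regular_imp_regular_space regular_t1_imp_Hausdorff_space by blast
  then obtain \<phi> :: "nat \<times> bool \<Rightarrow> 'b \<Rightarrow> real" and p where bumps: "peaked_bumps Y G \<phi> p"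
    using completely_regular_infinite_openin_peaked_bumps[OF assms(1) _ assms(3,4)] by blast
  define f where "f = bump_series (dyadic_coeff \<alpha> g h) \<phi>"
  have "separately_continuous X Y f"
    unfolding f_def using bumps continuous_map_into_fulltopology[OF \<alpha>] assms(5,6)
    by (rule separately_continuous_dyadic_bump_series)
  moreover have "supp2 X Y f \<subseteq> (topspace X - A) \<times> G"
    using supp2_dyadic_bump_series[OF bumps, of X \<alpha> g h] A unfolding f_def by auto
  moreover have "(\<exists>y \<in> G. f x y = g x) \<and> (\<forall>y \<in> G. g x \<le> f x y) \<and>
      (\<exists>y \<in> G. f x y = h x) \<and> (\<forall>y \<in> G. f x y \<le> h x)" if "x \<in> topspace X - A" for x
  proof -
    have "0 < \<alpha> x" "\<alpha> x \<le> 1" "g x \<le> 0" "0 \<le> h x"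
      using that A \<alpha>_range[of x] assms(7) by auto
    then show ?thesis
      unfolding f_def by (rule dyadic_bump_series_extremes[OF bumps])
  qed
  ultimately show ?thesis
    by blast
qed

end
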